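(* Let $G,H$ be profinite groups and $\varphi:G\to H$ an abstract group isomorphism (not assumed continuous). If $P$ is a $p$-Sylow subgroup of $G$ for a prime $p$, then $\varphi(P)$ is a $p$-Sylow subgroup of $H$.
   Context: A $p$-Sylow subgroup of a profinite group is a maximal closed pro-$p$ subgroup. *)

theory Defs
  imports "HOL-Algebra.Algebra" "HOL-Analysis.Analysis"
begin

definition topological_group :: "('a, 'b) monoid_scheme \<Rightarrow> 'a topology \<Rightarrow> bool" where
  "topological_group G T \<longleftrightarrow> group G \<and> topspace T = carrier G \<and>
     continuous_map (prod_topology T T) T (\<lambda>(x, y). x \<otimes>\<^bsub>G\<^esub> y) \<and>
     continuous_map T T (\<lambda>x. inv\<^bsub>G\<^esub> x)"

definition profinite_group :: "('a, 'b) monoid_scheme \<Rightarrow> 'a topology \<Rightarrow> bool" where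
  "profinite_group G T \<longleftrightarrow> topological_group G T \<and> compact_space T \<and> Hausdorff_space T \<and>
     (\<forall>x \<in> topspace T. connected_component_of_set T x = {x})"

definition pro_p_group :: "nat \<Rightarrow> ('a, 'b) monoid_scheme \<Rightarrow> 'a topology \<Rightarrow> bool" where
  "pro_p_group p G T \<longleftrightarrow> profinite_group G T \<and>
     (\<forall>N. N \<lhd> G \<and> openin T N \<longrightarrow> finite (carrier (G Mod N)) \<and> (\<exists>k. card (carrier (G Mod N)) = p ^ k))"

definition closed_pro_p_subgroup :: "nat \<Rightarrow> ('a, 'b) monoid_scheme \<Rightarrow> 'a topology \<Rightarrow> 'a set \<Rightarrow> bool" where
  "closed_pro_p_subgroup p G T P \<longleftrightarrow> subgroup P G \<and> closedin T P \<and>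
     pro_p_group p (G\<lparr>carrier := P\<rparr>) (subtopology T P)"

definition sylow_subgroup :: "nat \<Rightarrow> ('a, 'b) monoid_scheme \<Rightarrow> 'a topology \<Rightarrow> 'a set \<Rightarrow> bool" where
  "sylow_subgroup p G T P \<longleftrightarrow> closed_pro_p_subgroup p G T P \<and>
     (\<forall>Q. closed_pro_p_subgroup p G T Q \<and> P \<subseteq> Q \<longrightarrow> Q = P)"

end

theory Submission
  imports Defs
begin

text \<open>Call a subgroup \<open>p'\<close>-root closed if each of its elements has an \<open>n\<close>-th root inside
  it for every \<open>n\<close> prime to \<open>p\<close>. In a profinite group every closed pro-\<open>p\<close> subgroup is
  \<open>p'\<close>-root closed: the roots exist modulo each open normal subgroup because the quotients
  are \<open>p\<close>-groups, and compactness assembles them. Conversely the closure of a \<open>p'\<close>-root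
  closed subgroup is pro-\<open>p\<close>, since a prime \<open>q \<noteq> p\<close> dividing the order of a finite
  quotient would give an element whose order divides both a power of \<open>q\<close> and a power
  of \<open>p\<close>. Hence the \<open>p\<close>-Sylow subgroups are exactly the maximal \<open>p'\<close>-root closed
  subgroups, a notion that only involves the abstract group structure and is therefore
  preserved by every isomorphism.\<close>

definition coprime_root_closed :: "nat \<Rightarrow> ('a, 'b) monoid_scheme \<Rightarrow> 'a set \<Rightarrow> bool" where
  "coprime_root_closed p G S \<longleftrightarrow> (\<forall>x\<in>S. \<forall>n. coprime n p \<longrightarrow> (\<exists>y\<in>S. y [^]\<^bsub>G\<^esub> n = x))"

definition maximal_root_closed_subgroup :: "nat \<Rightarrow> ('a, 'b) monoid_scheme \<Rightarrow> 'a set \<Rightarrow> bool" where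
  "maximal_root_closed_subgroup p G P \<longleftrightarrow> subgroup P G \<and> coprime_root_closed p G P \<and>
     (\<forall>R. subgroup R G \<and> coprime_root_closed p G R \<and> P \<subseteq> R \<longrightarrow> R = P)"

lemma coprime_root_closed_carrier_update [simp]:
  "coprime_root_closed p (G\<lparr>carrier := C\<rparr>) S \<longleftrightarrow> coprime_root_closed p G S"
  by (simp add: coprime_root_closed_def nat_pow_def)

section \<open>Transport along isomorphisms\<close>

lemma (in group_hom) coprime_root_closed_image:
  assumes root: "coprime_root_closed p G S" and S: "S \<subseteq> carrier G"
  shows "coprime_root_closed p H (h ` S)"
  unfolding coprime_root_closed_def
proof (intro ballI allI impI)
  fix x n assume "x \<in> h ` S" "coprime n p"
  then obtain a b where "a \<in> S" "x = h a" "b \<in> S" "b [^] n = a"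
    using root unfolding coprime_root_closed_def by blast
  then have "h b [^]\<^bsub>H\<^esub> n = x" using S hom_nat_pow by auto
  then show "\<exists>y\<in>h ` S. y [^]\<^bsub>H\<^esub> n = x" using \<open>b \<in> S\<close> by blast
qed

lemma iso_maximal_root_closed_subgroup:
  assumes "group G" "group H" and \<phi>: "\<phi> \<in> iso G H"
    and P: "maximal_root_closed_subgroup p G P"
  shows "maximal_root_closed_subgroup p H (\<phi> ` P)"
proof -
  define \<psi> where "\<psi> = inv_into (carrier G) \<phi>"
  have \<psi>: "\<psi> \<in> iso H G" unfolding \<psi>_def using group.iso_set_sym[OF \<open>group G\<close> \<phi>] .
  interpret \<phi>: group_hom G H \<phi>
    using assms \<phi> by (simp add: group_hom_def group_hom_axioms_def iso_def)
  interpret \<psi>: group_hom H G \<psi>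
    using assms \<psi> by (simp add: group_hom_def group_hom_axioms_def iso_def)
  have sub: "subgroup P G" and root: "coprime_root_closed p G P"
    and max: "\<And>R. subgroup R G \<Longrightarrow> coprime_root_closed p G R \<Longrightarrow> P \<subseteq> R \<Longrightarrow> R = P"
    using P unfolding maximal_root_closed_subgroup_def by blast+
  have bij: "bij_betw \<phi> (carrier G) (carrier H)" using \<phi> by (simp add: iso_def)
  have \<psi>\<phi>: "\<psi> ` \<phi> ` P = P"
    using bij subgroup.subset[OF sub] unfolding \<psi>_def
    by (simp add: bij_betw_def inv_into_image_cancel)
  have \<phi>\<psi>: "\<phi> ` \<psi> ` R = R" if "R \<subseteq> carrier H" for R
    using bij that unfolding \<psi>_def by (simp add: bij_betw_def image_inv_into_cancel)
  have "R = \<phi> ` P"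
    if "subgroup R H" "coprime_root_closed p H R" "\<phi> ` P \<subseteq> R" for R
  proof -
    have "\<psi> ` R = P"
      using that max \<psi>.subgroup_img_is_subgroup \<psi>.coprime_root_closed_image subgroup.subset
      by (metis \<psi>\<phi> image_mono)
    then show ?thesis using \<phi>\<psi> subgroup.subset[OF that(1)] by metis
  qed
  then show ?thesis
    unfolding maximal_root_closed_subgroup_def
    using \<phi>.subgroup_img_is_subgroup[OF sub] \<phi>.coprime_root_closed_image[OF root subgroup.subset[OF sub]]
    by blast
qed

section \<open>Finite groups of prime power exponent\<close>

lemma (in group) exists_nontrivial_prime_power_ord:
  assumes fin: "finite (carrier G)" and q: "Factorial_Ring.prime q" "q dvd Coset.order G"
  shows "\<exists>h\<in>carrier G. h \<noteq> \<one> \<and> ord h dvd q ^ multiplicity q (Coset.order G)"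
proof -
  define m where "m = multiplicity q (Coset.order G)"
  have o0: "Coset.order G \<noteq> 0" using fin by (simp add: order_gt_0_iff_finite[symmetric])
  obtain r where r: "Coset.order G = q ^ m * r"
    unfolding m_def using multiplicity_decompose'[OF o0] q(1) not_prime_unit by blast
  obtain K where K: "subgroup K G" "card K = q ^ m"
    using sylow_thm[OF q(1) is_group r fin] by blast
  have "m \<ge> 1"
    using q o0 by (simp add: m_def prime_multiplicity_gt_zero_iff Suc_le_eq)
  then have "q ^ 1 \<le> q ^ m"
    by (rule power_increasing) (use prime_gt_0_nat[OF q(1)] in linarith)
  then have "card K \<ge> 2" using K(2) prime_ge_2_nat[OF q(1)] by simp
  have "\<not> K \<subseteq> {\<one>}"
  proof
    assume "K \<subseteq> {\<one>}"
    then have "card K \<le> 1" using card_mono[of "{\<one>}" K] by simp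
    with \<open>card K \<ge> 2\<close> show False by simp
  qed
  then obtain h where h: "h \<in> K" "h \<noteq> \<one>" by blast
  have hc: "h \<in> carrier G" using subgroup.mem_carrier[OF K(1) h(1)] .
  interpret K: group "G\<lparr>carrier := K\<rparr>" using subgroup.subgroup_is_group[OF K(1) is_group] .
  have "h [^] (q ^ m) = \<one>"
    using K.pow_order_eq_1 h(1) K(2) by (simp add: Coset.order_def nat_pow_consistent[symmetric])
  then show ?thesis using pow_eq_id[OF hc] hc h(2) unfolding m_def by blast
qed

lemma (in group) order_prime_power_if_exponent:
  assumes fin: "finite (carrier G)" and p: "Factorial_Ring.prime p"
    and exp: "\<forall>x\<in>carrier G. x [^] (p ^ a) = \<one>"
  shows "\<exists>k. Coset.order G = p ^ k"
proof -
  have only_p: "q = p" if q: "Factorial_Ring.prime q" "q dvd Coset.order G" for q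
  proof (rule ccontr)
    assume "q \<noteq> p"
    obtain h where h: "h \<in> carrier G" "h \<noteq> \<one>" "ord h dvd q ^ multiplicity q (Coset.order G)"
      using exists_nontrivial_prime_power_ord[OF fin q] by blast
    moreover have "ord h dvd p ^ a" using pow_eq_id[OF h(1)] exp h(1) by blast
    moreover have "coprime (q ^ multiplicity q (Coset.order G)) (p ^ a)"
      using q(1) p \<open>q \<noteq> p\<close> by (simp add: primes_coprime)
    ultimately have "ord h = 1" using coprime_common_divisor_nat by blast
    then show False using h ord_eq_1 by blast
  qed
  have "Coset.order G \<noteq> 0" using fin by (simp add: order_gt_0_iff_finite[symmetric])
  then obtain r where r: "Coset.order G = p ^ multiplicity p (Coset.order G) * r" "\<not> p dvd r"
    using multiplicity_decompose' p not_prime_unit by blast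
  have "r = 1"
  proof (rule ccontr)
    assume "r \<noteq> 1"
    then obtain q :: nat where "Factorial_Ring.prime q" "q dvd r" using prime_factor_nat by blast
    then show False using only_p r by (metis dvd_mult)
  qed
  then show ?thesis using r(1) by auto
qed

section \<open>Topological groups\<close>

locale topgroup = group G for G (structure) +
  fixes T :: "'a topology"
  assumes topological_group: "topological_group G T"
begin

lemma topspace_eq [simp]: "topspace T = carrier G"
  using topological_group by (simp add: topological_group_def)

lemma continuous_map_mult:
  assumes "continuous_map Z T f" "continuous_map Z T g"
  shows "continuous_map Z T (\<lambda>x. f x \<otimes> g x)"
proof -
  have "continuous_map (prod_topology T T) T (\<lambda>(x, y). x \<otimes> y)"
    using topological_group by (simp add: topological_group_def)
  from continuous_map_compose[OF continuous_map_pairedI[OF assms] this]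
  show ?thesis by (simp add: o_def)
qed

lemma continuous_map_inv:
  assumes "continuous_map Z T f"
  shows "continuous_map Z T (\<lambda>x. inv (f x))"
proof -
  have "continuous_map T T (\<lambda>x. inv x)"
    using topological_group by (simp add: topological_group_def)
  from continuous_map_compose[OF assms this] show ?thesis by (simp add: o_def)
qed

lemma continuous_map_nat_pow: "continuous_map T T (\<lambda>x. x [^] (n::nat))"
  by (induction n) (simp_all add: continuous_map_mult[OF _ continuous_map_id[unfolded id_def]])

lemma continuous_map_mult_right:
  "a \<in> carrier G \<Longrightarrow> continuous_map T T (\<lambda>x. x \<otimes> a)"
  by (simp add: continuous_map_mult[OF continuous_map_id[unfolded id_def]])

lemma continuous_map_mult_left:
  "a \<in> carrier G \<Longrightarrow> continuous_map T T (\<lambda>x. a \<otimes> x)"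
  by (simp add: continuous_map_mult[OF _ continuous_map_id[unfolded id_def]])

lemma subgroup_nat_pow_closed: "subgroup N G \<Longrightarrow> h \<in> N \<Longrightarrow> h [^] (n::nat) \<in> N"
  by (induction n) (auto simp: subgroup.one_closed subgroup.m_closed)

lemma openin_rcos:
  assumes "openin T N" "subgroup N G" "a \<in> carrier G"
  shows "openin T (N #> a)"
proof -
  have "N #> a = {x \<in> topspace T. x \<otimes> inv a \<in> N}"
    using assms(2,3) by (auto simp: r_coset_def m_assoc subgroup.mem_carrier intro!: bexI[of _ "_ \<otimes> inv a"])
  then show ?thesis
    using openin_continuous_map_preimage[OF continuous_map_mult_right assms(1)] assms(3) by simp
qed

lemma closedin_open_subgroup:
  assumes "openin T N" "subgroup N G"
  shows "closedin T N"
proof -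
  have "topspace T - N = (\<Union>a\<in>carrier G - N. N #> a)"
  proof
    show "topspace T - N \<subseteq> (\<Union>a\<in>carrier G - N. N #> a)"
      using assms(2) rcos_self by auto
    show "(\<Union>a\<in>carrier G - N. N #> a) \<subseteq> topspace T - N"
    proof clarify
      fix a x assume a: "a \<in> carrier G" "a \<notin> N" and x: "x \<in> N #> a"
      have "x \<in> carrier G" using r_coset_subset_G[OF subgroup.subset[OF assms(2)] a(1)] x by blast
      moreover have "x \<notin> N"
        using a x assms(2) rcos_self repr_independence coset_join2 \<open>x \<in> carrier G\<close> by metis
      ultimately show "x \<in> topspace T - N" by simp
    qed
  qed
  moreover have "openin T (\<Union>a\<in>carrier G - N. N #> a)"
    using assms openin_rcos by auto
  ultimately show ?thesis
    using assms(2) by (simp add: closedin_def subgroup.subset)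
qed

lemma finite_rcosets_open_subgroup:
  assumes "compact_space T" "openin T N" "subgroup N G"
  shows "finite (rcosets N)"
proof -
  have "compactin T (topspace T)" using assms(1) by (simp add: compact_space_def)
  moreover have "\<forall>u\<in>rcosets N. openin T u"
    using assms openin_rcos by (auto simp: RCOSETS_def)
  moreover have "topspace T \<subseteq> \<Union>(rcosets N)"
    using assms(3) rcos_self by (auto simp: RCOSETS_def)
  ultimately obtain F where F: "finite F" "F \<subseteq> rcosets N" "topspace T \<subseteq> \<Union>F"
    unfolding compactin_def by meson
  have "rcosets N \<subseteq> F"
  proof
    fix R assume "R \<in> rcosets N"
    then obtain b where b: "b \<in> carrier G" "R = N #> b" by (auto simp: RCOSETS_def)
    then obtain C where C: "C \<in> F" "b \<in> C" using F(3) by auto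
    then obtain a where "a \<in> carrier G" "C = N #> a" using F(2) by (auto simp: RCOSETS_def)
    then show "R \<in> F" using b C repr_independence assms(3) by metis
  qed
  then show ?thesis using F(1) finite_subset by blast
qed

lemma openin_subgroup_if_nbhd:
  assumes "subgroup N G" "openin T V" "\<one> \<in> V" "V \<subseteq> N"
  shows "openin T N"
proof -
  have "\<exists>W. openin T W \<and> h \<in> W \<and> W \<subseteq> N" if h: "h \<in> N" for h
  proof -
    have hc: "h \<in> carrier G" using subgroup.mem_carrier[OF assms(1) h] .
    let ?W = "{x \<in> topspace T. inv h \<otimes> x \<in> V}"
    have "openin T ?W"
      using openin_continuous_map_preimage[OF continuous_map_mult_left assms(2)] hc by simp
    moreover have "h \<in> ?W" using hc assms(3) by simp
    moreover have "?W \<subseteq> N"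
    proof
      fix x assume x: "x \<in> ?W"
      then have "h \<otimes> (inv h \<otimes> x) \<in> N" using assms(1,4) h by (auto intro: subgroup.m_closed)
      then show "x \<in> N" using x hc by (simp add: m_assoc[symmetric])
    qed
    ultimately show ?thesis by blast
  qed
  then show ?thesis using openin_subopen[of T N] by blast
qed

lemma subgroup_subset_closure_of: "subgroup S G \<Longrightarrow> S \<subseteq> T closure_of S"
  using closure_of_subset[of S T] subgroup.subset[of S G] by simp

lemma subgroup_closure_of:
  assumes S: "subgroup S G"
  shows "subgroup (T closure_of S) G"
proof -
  let ?f = "\<lambda>z. fst z \<otimes> inv (snd z)"
  have cf: "continuous_map (prod_topology T T) T ?f"
    by (rule continuous_map_mult[OF continuous_map_fst continuous_map_inv[OF continuous_map_snd]])
  have img: "?f ` (S \<times> S) \<subseteq> S"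
    using S by (auto intro!: subgroup.m_closed[OF S] subgroup.m_inv_closed[OF S])
  have div: "a \<otimes> inv b \<in> T closure_of S" if "a \<in> T closure_of S" "b \<in> T closure_of S" for a b
  proof -
    have "(a, b) \<in> prod_topology T T closure_of (S \<times> S)" using that by (simp add: closure_of_Times)
    then have "?f (a, b) \<in> T closure_of (?f ` (S \<times> S))"
      using continuous_map_image_closure_subset[OF cf] by blast
    then show ?thesis using closure_of_mono[OF img] by auto
  qed
  have sub: "T closure_of S \<subseteq> carrier G" using closure_of_subset_topspace[of T S] by simp
  have one: "\<one> \<in> T closure_of S"
    using subgroup_subset_closure_of[OF S] subgroup.one_closed[OF S] by blast
  have inv: "inv b \<in> T closure_of S" if "b \<in> T closure_of S" for b
    using div[OF one that] that sub by auto
  show ?thesis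
  proof (rule subgroupI[OF sub])
    show "T closure_of S \<noteq> {}" using one by blast
  next
    fix a b assume "a \<in> T closure_of S" "b \<in> T closure_of S"
    then show "a \<otimes> b \<in> T closure_of S" using div[of a "inv b"] inv sub by auto
  qed (use inv in blast)
qed

lemma topological_group_subgroup:
  assumes C: "subgroup C G"
  shows "topological_group (G\<lparr>carrier := C\<rparr>) (subtopology T C)"
proof -
  have top: "topspace (subtopology T C) = C" using subgroup.subset[OF C] by auto
  have "continuous_map (prod_topology T T) T (\<lambda>z. fst z \<otimes> snd z)"
    by (rule continuous_map_mult[OF continuous_map_fst continuous_map_snd])
  then have "continuous_map (subtopology (prod_topology T T) (C \<times> C)) T (\<lambda>z. fst z \<otimes> snd z)"
    by (rule continuous_map_from_subtopology)
  then have "continuous_map (prod_topology (subtopology T C) (subtopology T C)) T (\<lambda>z. fst z \<otimes> snd z)"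
    by (simp add: subtopology_Times)
  moreover have "(\<lambda>z. fst z \<otimes> snd z) ` topspace (prod_topology (subtopology T C) (subtopology T C)) \<subseteq> C"
  proof
    fix w assume "w \<in> (\<lambda>z. fst z \<otimes> snd z) ` topspace (prod_topology (subtopology T C) (subtopology T C))"
    then obtain a b where "a \<in> C" "b \<in> C" "w = a \<otimes> b" using top by auto
    then show "w \<in> C" using subgroup.m_closed[OF C] by simp
  qed
  ultimately have "continuous_map (prod_topology (subtopology T C) (subtopology T C)) (subtopology T C)
      (\<lambda>(x, y). x \<otimes> y)"
    unfolding continuous_map_in_subtopology by (simp add: case_prod_beta' image_subset_iff_funcset)
  moreover have "continuous_map (subtopology T C) (subtopology T C) (\<lambda>x. inv\<^bsub>G\<lparr>carrier := C\<rparr>\<^esub> x)"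
  proof (rule continuous_map_eq)
    show "continuous_map (subtopology T C) (subtopology T C) (\<lambda>x. inv x)"
      unfolding continuous_map_in_subtopology
      using continuous_map_from_subtopology[OF continuous_map_inv[OF continuous_map_id[unfolded id_def]]]
        C top by (auto intro: subgroup.m_inv_closed)
  qed (use top m_inv_consistent[OF C] in simp)
  ultimately show ?thesis
    unfolding topological_group_def using subgroup.subgroup_is_group[OF C is_group] top by simp
qed

end

section \<open>Profinite groups\<close>

locale profinite = topgroup +
  assumes compact: "compact_space T" and Hausdorff: "Hausdorff_space T"
    and totally_disconnected: "\<forall>x \<in> topspace T. connected_component_of_set T x = {x}"

lemma profinite_group_imp_profinite: "profinite_group G T \<Longrightarrow> profinite G T"
  unfolding profinite_group_def profinite_def profinite_axioms_def topgroup_def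
    topgroup_axioms_def topological_group_def
  by auto

lemma (in group) subgroup_translation_stabilizer:
  "subgroup {h \<in> carrier G. \<forall>u\<in>carrier G. h \<otimes> u \<in> U \<longleftrightarrow> u \<in> U} G"
  (is "subgroup ?S G")
proof (rule subgroupI)
  fix h assume h: "h \<in> ?S"
  have "inv h \<otimes> u \<in> U \<longleftrightarrow> u \<in> U" if u: "u \<in> carrier G" for u
  proof -
    have "h \<otimes> (inv h \<otimes> u) \<in> U \<longleftrightarrow> inv h \<otimes> u \<in> U" using h u by simp
    moreover have "h \<otimes> (inv h \<otimes> u) = u" using h u by (simp add: m_assoc[symmetric])
    ultimately show ?thesis by simp
  qed
  with h show "inv h \<in> ?S" by simp
next
  fix h k assume h: "h \<in> ?S" and k: "k \<in> ?S"
  have "h \<otimes> k \<otimes> u \<in> U \<longleftrightarrow> u \<in> U" if u: "u \<in> carrier G" for u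
    using h k u by (simp add: m_assoc)
  with h k show "h \<otimes> k \<in> ?S" by simp
qed force+

lemma (in group) normal_core:
  assumes "subgroup K G"
  shows "{h \<in> carrier G. \<forall>g\<in>carrier G. g \<otimes> h \<otimes> inv g \<in> K} \<lhd> G"
proof -
  interpret K: subgroup K G by (rule assms)
  have conj_mult: "g \<otimes> (h \<otimes> k) \<otimes> inv g = (g \<otimes> h \<otimes> inv g) \<otimes> (g \<otimes> k \<otimes> inv g)"
    if "g \<in> carrier G" "h \<in> carrier G" "k \<in> carrier G" for g h k
    using that by (simp add: m_assoc) (simp add: m_assoc[symmetric])
  have conj_inv: "g \<otimes> inv h \<otimes> inv g = inv (g \<otimes> h \<otimes> inv g)"
    if "g \<in> carrier G" "h \<in> carrier G" for g h
    using that by (simp add: inv_mult_group m_assoc)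
  have conj_conj: "g \<otimes> (x \<otimes> h \<otimes> inv x) \<otimes> inv g = (g \<otimes> x) \<otimes> h \<otimes> inv (g \<otimes> x)"
    if "g \<in> carrier G" "x \<in> carrier G" "h \<in> carrier G" for g x h
    using that by (simp add: m_assoc inv_mult_group)
  show ?thesis
  proof (rule normal_invI)
    show "subgroup {h \<in> carrier G. \<forall>g\<in>carrier G. g \<otimes> h \<otimes> inv g \<in> K} G"
      by (rule subgroupI) (auto simp: conj_mult conj_inv)
  qed (auto simp: conj_conj)
qed

context profinite
begin

lemma clopen_nbhd_one_avoiding:
  assumes "x \<in> carrier G" "x \<noteq> \<one>"
  shows "\<exists>U. closedin T U \<and> openin T U \<and> \<one> \<in> U \<and> x \<notin> U"
proof -
  have "\<not> connected_component_of T \<one> x"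
    using totally_disconnected assms by (metis one_closed singletonD topspace_eq mem_Collect_eq)
  moreover have "quasi_component_of T \<one> = connected_component_of T \<one>"
    by (rule quasi_eq_connected_component_of) (simp add: compact Hausdorff)
  ultimately have "\<not> quasi_component_of T \<one> x" by simp
  then obtain U where U: "closedin T U" "openin T U" "\<not> (\<one> \<in> U \<longleftrightarrow> x \<in> U)"
    using assms unfolding quasi_component_of_def by auto
  show ?thesis
  proof (cases "\<one> \<in> U")
    case False
    then show ?thesis
      using U closedin_diff[OF closedin_topspace U(2)] openin_diff[OF openin_topspace U(1)]
      by (intro exI[of _ "topspace T - U"]) auto
  qed (use U in blast)
qed

text \<open>The tube lemma, applied to the compact set \<open>carrier G \<times> U\<close>, makes the neighbourhood
  \<open>V\<close> uniform in the conjugating element \<open>g\<close>.\<close>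

lemma clopen_conjugation_tube:
  assumes "closedin T U" "openin T U"
  shows "\<exists>V. openin T V \<and> \<one> \<in> V \<and> (\<forall>g\<in>carrier G. \<forall>u\<in>U. \<forall>v\<in>V. g \<otimes> v \<otimes> inv g \<otimes> u \<in> U)"
proof -
  let ?X = "prod_topology (prod_topology T T) T"
  let ?f = "\<lambda>((g, u), v). g \<otimes> v \<otimes> inv g \<otimes> u"
  have g: "continuous_map ?X T (\<lambda>z. fst (fst z))" and u: "continuous_map ?X T (\<lambda>z. snd (fst z))"
    using continuous_map_compose[OF continuous_map_fst continuous_map_fst]
      continuous_map_compose[OF continuous_map_fst continuous_map_snd] by (simp_all add: o_def)
  have "continuous_map ?X T (\<lambda>z. fst (fst z) \<otimes> snd z \<otimes> inv (fst (fst z)) \<otimes> snd (fst z))"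
    by (intro continuous_map_mult continuous_map_inv g u continuous_map_snd)
  then have "continuous_map ?X T ?f" by (simp add: case_prod_beta')
  then have W: "openin ?X {z \<in> topspace ?X. ?f z \<in> U}"
    using openin_continuous_map_preimage assms(2) by blast
  have C: "compactin (prod_topology T T) (carrier G \<times> U)"
    using closedin_compact_space[OF compact assms(1)] compact
    by (simp add: compactin_Times compact_space_def)
  have "U \<subseteq> carrier G" using openin_subset[OF assms(2)] by simp
  then have sub: "(carrier G \<times> U) \<times> {\<one>} \<subseteq> {z \<in> topspace ?X. ?f z \<in> U}"
    by (auto simp: m_assoc)
  obtain U' V where "openin T V" "carrier G \<times> U \<subseteq> U'" "\<one> \<in> V"
      "U' \<times> V \<subseteq> {z \<in> topspace ?X. ?f z \<in> U}"
    using tube_lemma_left[OF W C _ sub] by auto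
  then show ?thesis by (intro exI[of _ V]) fastforce
qed

text \<open>The normal core of the stabiliser of \<open>U\<close> lies in \<open>U\<close>; applying the tube lemma to \<open>U\<close>
  and to its complement shows that it contains a neighbourhood of \<open>\<one>\<close>.\<close>

lemma open_normal_subgroup_in_clopen:
  assumes "closedin T U" "openin T U" "\<one> \<in> U"
  shows "\<exists>N. N \<lhd> G \<and> openin T N \<and> N \<subseteq> U"
proof -
  define Stab where "Stab = {h \<in> carrier G. \<forall>u\<in>carrier G. h \<otimes> u \<in> U \<longleftrightarrow> u \<in> U}"
  define N where "N = {h \<in> carrier G. \<forall>g\<in>carrier G. g \<otimes> h \<otimes> inv g \<in> Stab}"
  have normal: "N \<lhd> G"
    unfolding N_def Stab_def by (rule normal_core[OF subgroup_translation_stabilizer])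
  have "N \<subseteq> U"
  proof
    fix h assume h: "h \<in> N"
    then have "\<one> \<otimes> h \<otimes> inv \<one> \<in> Stab" unfolding N_def by blast
    then have "\<forall>u\<in>carrier G. h \<otimes> u \<in> U \<longleftrightarrow> u \<in> U" using h unfolding N_def Stab_def by simp
    then have "h \<otimes> \<one> \<in> U \<longleftrightarrow> \<one> \<in> U" using one_closed by blast
    moreover have "h \<in> carrier G" using h unfolding N_def by blast
    ultimately show "h \<in> U" using assms(3) by simp
  qed
  obtain V1 where V1: "openin T V1" "\<one> \<in> V1"
    "\<forall>g\<in>carrier G. \<forall>u\<in>U. \<forall>v\<in>V1. g \<otimes> v \<otimes> inv g \<otimes> u \<in> U"
    using clopen_conjugation_tube[OF assms(1,2)] by blast
  have co: "closedin T (carrier G - U)" "openin T (carrier G - U)"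
    using closedin_diff[OF closedin_topspace assms(2)] openin_diff[OF openin_topspace assms(1)] by auto
  obtain V2 where V2: "openin T V2" "\<one> \<in> V2"
    "\<forall>g\<in>carrier G. \<forall>u\<in>carrier G - U. \<forall>v\<in>V2. g \<otimes> v \<otimes> inv g \<otimes> u \<in> carrier G - U"
    using clopen_conjugation_tube[OF co] by blast
  have "V1 \<inter> V2 \<subseteq> N"
  proof
    fix v assume v: "v \<in> V1 \<inter> V2"
    then have "v \<in> carrier G" using openin_subset[OF V1(1)] by auto
    moreover have "g \<otimes> v \<otimes> inv g \<otimes> u \<in> U \<longleftrightarrow> u \<in> U" if "g \<in> carrier G" "u \<in> carrier G" for g u
      using V1(3) V2(3) v that by blast
    ultimately show "v \<in> N" unfolding N_def Stab_def by simp
  qed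
  then have "openin T N"
    using openin_subgroup_if_nbhd[OF normal_imp_subgroup[OF normal]] V1 V2 by blast
  with normal \<open>N \<subseteq> U\<close> show ?thesis by blast
qed

lemma open_normal_subgroup_avoiding:
  assumes "x \<in> carrier G" "x \<noteq> \<one>"
  shows "\<exists>N. N \<lhd> G \<and> openin T N \<and> x \<notin> N"
  using clopen_nbhd_one_avoiding[OF assms] open_normal_subgroup_in_clopen by blast

lemma open_normal_subgroup_in_finite_Inter:
  assumes "finite \<N>" "\<forall>N\<in>\<N>. N \<lhd> G \<and> openin T N"
  shows "\<exists>N0. N0 \<lhd> G \<and> openin T N0 \<and> N0 \<subseteq> \<Inter>\<N>"
  using assms
proof (induction \<N> rule: finite_induct)
  case empty
  then show ?case using normal_self openin_topspace[of T] by auto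
next
  case (insert N \<N>)
  then obtain N0 where "N0 \<lhd> G" "openin T N0" "N0 \<subseteq> \<Inter>\<N>" by blast
  with insert.prems show ?case
    by (intro exI[of _ "N0 \<inter> N"]) (auto intro: normal_subgroup_intersect openin_Int)
qed

lemma profinite_closed_subgroup:
  assumes C: "subgroup C G" "closedin T C"
  shows "profinite_group (G\<lparr>carrier := C\<rparr>) (subtopology T C)"
proof -
  have top: "topspace (subtopology T C) = C" using subgroup.subset[OF C(1)] by auto
  have "compact_space (subtopology T C)"
    using compact_space_subtopology closedin_compact_space[OF compact C(2)] by blast
  moreover have "Hausdorff_space (subtopology T C)" using Hausdorff Hausdorff_space_subtopology by blast
  moreover have "connected_component_of_set (subtopology T C) x = {x}" if "x \<in> C" for x
  proof -
    have "connected_component_of_set (subtopology T C) x \<subseteq> connected_component_of_set T x"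
      using connected_component_of_mono[of T C x _ "topspace T"] subtopology_topspace[of T] C(1)
      by (auto simp: subgroup.subset)
    then show ?thesis
      using totally_disconnected that C(1) connected_component_of_refl[of "subtopology T C" x] top
      by (auto simp: subgroup.mem_carrier)
  qed
  ultimately show ?thesis
    unfolding profinite_group_def using topological_group_subgroup[OF C(1)] top by simp
qed

end

section \<open>Pro-\<open>p\<close> groups and coprime roots\<close>

lemma (in group) nat_pow_index_in_normal:
  assumes "N \<lhd> G" "finite (carrier (G Mod N))" "x \<in> carrier G"
  shows "x [^] card (carrier (G Mod N)) \<in> N"
proof -
  interpret N: normal N G by (rule assms(1))
  interpret F: group "G Mod N" by (rule N.factorgroup_is_group)
  have "N #> x \<in> carrier (G Mod N)"
    using assms(3) by (auto simp: FactGroup_def RCOSETS_def)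
  then have "(N #> x) [^]\<^bsub>G Mod N\<^esub> Coset.order (G Mod N) = \<one>\<^bsub>G Mod N\<^esub>"
    by (rule F.pow_order_eq_1)
  moreover have "(N #> x) [^]\<^bsub>G Mod N\<^esub> (n::nat) = N #> (x [^] n)" for n
    using hom_nat_pow[OF N.r_coset_hom_Mod assms(3) is_group F.is_group] by simp
  ultimately have "N #> (x [^] card (carrier (G Mod N))) = N"
    by (simp add: Coset.order_def)
  then show ?thesis
    using coset_join1 assms(3) N.subgroup_axioms by blast
qed

text \<open>For an open normal \<open>N\<close> of index \<open>p ^ k\<close>, Bezout gives \<open>n * m = p ^ k * j + 1\<close>, so
  \<open>x [^] m\<close> is an \<open>n\<close>-th root of \<open>x\<close> modulo \<open>N\<close>. These approximate roots form closed sets with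
  the finite intersection property, and a point of their intersection is an exact root
  because the open normal subgroups separate points.\<close>

lemma (in profinite) coprime_roots_exist:
  assumes pro_p: "pro_p_group p G T" and p: "Factorial_Ring.prime p"
    and x: "x \<in> carrier G" and n: "coprime n p"
  shows "\<exists>y\<in>carrier G. y [^] n = x"
proof -
  define A where "A N = {y \<in> topspace T. y [^] n \<otimes> inv x \<in> N}" for N
  let ?\<N> = "{N. N \<lhd> G \<and> openin T N}"
  have cf: "continuous_map T T (\<lambda>y. y [^] n \<otimes> inv x)"
    using continuous_map_mult[OF continuous_map_nat_pow, of "\<lambda>_. inv x"] x by simp
  have closed: "closedin T (A N)" if "N \<in> ?\<N>" for N
    using that closedin_open_subgroup normal_imp_subgroup closedin_continuous_map_preimage[OF cf]
    unfolding A_def by blast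
  have n0: "n \<noteq> 0" using n p by (metis coprime_0_left_iff not_prime_unit)
  have nonempty: "A N \<noteq> {}" if N: "N \<lhd> G" "openin T N" for N
  proof -
    obtain k where fin: "finite (carrier (G Mod N))" and ck: "card (carrier (G Mod N)) = p ^ k"
      using pro_p N unfolding pro_p_group_def by blast
    obtain m j where mj: "n * m = p ^ k * j + 1"
      using bezout_nat[OF n0, of "p ^ k"] n by auto
    have "(x [^] m) [^] n \<otimes> inv x = (x [^] (p ^ k)) [^] j"
      using x by (simp add: nat_pow_pow nat_pow_mult mult.commute[of m n] mj m_assoc)
    moreover have "x [^] (p ^ k) \<in> N" using nat_pow_index_in_normal[OF N(1) fin x] ck by simp
    ultimately have "x [^] m \<in> A N"
      unfolding A_def using x subgroup_nat_pow_closed[OF normal_imp_subgroup[OF N(1)]] by auto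
    then show ?thesis by blast
  qed
  have finite_Inter: "\<Inter>\<F> \<noteq> {}" if F: "finite \<F>" "\<F> \<subseteq> A ` ?\<N>" for \<F>
  proof -
    obtain \<N>' where \<N>': "\<N>' \<subseteq> ?\<N>" "finite \<N>'" "\<F> = A ` \<N>'"
      using F by (meson finite_subset_image)
    then obtain N0 where "N0 \<lhd> G" "openin T N0" "N0 \<subseteq> \<Inter>\<N>'"
      using open_normal_subgroup_in_finite_Inter[of \<N>'] by blast
    moreover have "A N0 \<subseteq> \<Inter>\<F>" using \<open>N0 \<subseteq> \<Inter>\<N>'\<close> \<N>'(3) unfolding A_def by auto
    ultimately show ?thesis using nonempty by blast
  qed
  have "(\<forall>C\<in>A ` ?\<N>. closedin T C) \<and> (\<forall>\<F>. finite \<F> \<and> \<F> \<subseteq> A ` ?\<N> \<longrightarrow> \<Inter>\<F> \<noteq> {})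
      \<longrightarrow> \<Inter>(A ` ?\<N>) \<noteq> {}"
    using compact unfolding compact_space_fip by blast
  then have "\<Inter>(A ` ?\<N>) \<noteq> {}" using closed finite_Inter by blast
  then obtain y where y: "\<And>N. N \<lhd> G \<Longrightarrow> openin T N \<Longrightarrow> y \<in> A N" by blast
  have yc: "y \<in> carrier G"
    using y[OF normal_self openin_topspace[of T, simplified]] unfolding A_def by simp
  have "y [^] n \<otimes> inv x = \<one>"
    using y open_normal_subgroup_avoiding[of "y [^] n \<otimes> inv x"] yc x unfolding A_def by blast
  then have "y [^] n = x"
    using yc x by (metis inv_equality inv_inv nat_pow_closed inv_closed)
  then show ?thesis using yc by blast
qed

lemma (in group) closed_pro_p_subgroup_coprime_root_closed:
  assumes "closed_pro_p_subgroup p G T Q" "Factorial_Ring.prime p"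
  shows "coprime_root_closed p G Q"
proof -
  have pro_p: "pro_p_group p (G\<lparr>carrier := Q\<rparr>) (subtopology T Q)"
    using assms(1) unfolding closed_pro_p_subgroup_def by blast
  then interpret Q: profinite "G\<lparr>carrier := Q\<rparr>" "subtopology T Q"
    using profinite_group_imp_profinite unfolding pro_p_group_def by blast
  have "coprime_root_closed p (G\<lparr>carrier := Q\<rparr>) Q"
    using Q.coprime_roots_exist[OF pro_p assms(2)] unfolding coprime_root_closed_def by simp
  then show ?thesis by simp
qed

lemma (in group) order_prime_power_if_coprime_root_closed:
  assumes fin: "finite (carrier G)" and p: "Factorial_Ring.prime p"
    and root: "coprime_root_closed p G (carrier G)"
  shows "\<exists>k. Coset.order G = p ^ k"
proof -
  define e where "e = multiplicity p (Coset.order G)"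
  have "Coset.order G \<noteq> 0" using fin by (simp add: order_gt_0_iff_finite[symmetric])
  then obtain r where r: "Coset.order G = p ^ e * r" "\<not> p dvd r"
    using multiplicity_decompose' p not_prime_unit unfolding e_def by blast
  have "coprime r p" using prime_imp_coprime[OF p r(2)] coprime_commute by blast
  have "f [^] (p ^ e) = \<one>" if f: "f \<in> carrier G" for f
  proof -
    obtain y where y: "y \<in> carrier G" "y [^] r = f"
      using root \<open>coprime r p\<close> f unfolding coprime_root_closed_def by blast
    then have "f [^] (p ^ e) = (y [^] r) [^] (p ^ e)" by simp
    also have "\<dots> = y [^] (r * p ^ e)" using nat_pow_pow[OF y(1)] .
    also have "\<dots> = y [^] Coset.order G" by (simp add: r(1) mult.commute)
    also have "\<dots> = \<one>" using pow_order_eq_1[OF y(1)] .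
    finally show ?thesis .
  qed
  then show ?thesis using order_prime_power_if_exponent[OF fin p, of e] by blast
qed

text \<open>Each coset of an open normal subgroup meets the dense set \<open>S\<close>, so it is represented
  by an element of \<open>S\<close> and its roots can be taken inside \<open>S\<close>.\<close>

lemma (in profinite) coprime_root_closed_quotient_if_dense:
  assumes "S \<subseteq> carrier G" and S: "T closure_of S = carrier G"
    and root: "coprime_root_closed p G S" and M: "M \<lhd> G" "openin T M"
  shows "coprime_root_closed p (G Mod M) (carrier (G Mod M))"
  unfolding coprime_root_closed_def
proof (intro ballI allI impI)
  fix f n assume f: "f \<in> carrier (G Mod M)" and "coprime n p"
  interpret M: normal M G by (rule M(1))
  interpret F: group "G Mod M" by (rule M.factorgroup_is_group)
  obtain c where c: "c \<in> carrier G" "f = M #> c" using f by (auto simp: FactGroup_def RCOSETS_def)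
  then have "c \<in> T closure_of S" "c \<in> M #> c" using S rcos_self M.subgroup_axioms by auto
  then obtain s where s: "s \<in> S" "s \<in> M #> c"
    using openin_rcos[OF M(2) M.subgroup_axioms c(1)] unfolding in_closure_of by blast
  then obtain y where "y \<in> S" "y [^] n = s"
    using root \<open>coprime n p\<close> unfolding coprime_root_closed_def by blast
  then have y: "y \<in> carrier G" "f = M #> (y [^] n)"
    using s c repr_independence[OF s(2) c(1) M.subgroup_axioms] \<open>S \<subseteq> carrier G\<close> by auto
  then have "f = (M #> y) [^]\<^bsub>G Mod M\<^esub> n"
    using hom_nat_pow[OF M.r_coset_hom_Mod y(1) is_group F.is_group] by simp
  moreover have "M #> y \<in> carrier (G Mod M)" using y(1) by (auto simp: FactGroup_def RCOSETS_def)
  ultimately show "\<exists>z\<in>carrier (G Mod M). z [^]\<^bsub>G Mod M\<^esub> n = f" by blast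
qed

lemma (in profinite) pro_p_group_if_dense_coprime_root_closed:
  assumes p: "Factorial_Ring.prime p" and "S \<subseteq> carrier G" "T closure_of S = carrier G"
    and "coprime_root_closed p G S"
  shows "pro_p_group p G T"
proof -
  have "finite (carrier (G Mod M)) \<and> (\<exists>k. card (carrier (G Mod M)) = p ^ k)"
    if M: "M \<lhd> G" "openin T M" for M
  proof -
    interpret F: group "G Mod M" by (rule normal.factorgroup_is_group[OF M(1)])
    have fin: "finite (carrier (G Mod M))"
      using finite_rcosets_open_subgroup[OF compact M(2) normal_imp_subgroup[OF M(1)]]
      by (simp add: FactGroup_def)
    then show ?thesis
      using F.order_prime_power_if_coprime_root_closed[OF fin p]
        coprime_root_closed_quotient_if_dense[OF assms(2-4) M] by (simp add: Coset.order_def)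
  qed
  then show ?thesis
    unfolding pro_p_group_def profinite_group_def
    using topological_group compact Hausdorff totally_disconnected by blast
qed

lemma (in profinite) closed_pro_p_subgroup_closure:
  assumes S: "subgroup S G" and p: "Factorial_Ring.prime p"
    and root: "coprime_root_closed p G S"
  shows "closed_pro_p_subgroup p G T (T closure_of S)"
proof -
  define C where "C = T closure_of S"
  have C: "subgroup C G" "closedin T C" unfolding C_def using subgroup_closure_of[OF S] by auto
  interpret K: profinite "G\<lparr>carrier := C\<rparr>" "subtopology T C"
    using profinite_group_imp_profinite[OF profinite_closed_subgroup[OF C]] .
  have "S \<subseteq> C" unfolding C_def using subgroup_subset_closure_of[OF S] .
  then have "subtopology T C closure_of S = carrier (G\<lparr>carrier := C\<rparr>)"
    by (simp add: closure_of_subtopology_open C_def)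
  then have "pro_p_group p (G\<lparr>carrier := C\<rparr>) (subtopology T C)"
    using K.pro_p_group_if_dense_coprime_root_closed[OF p] \<open>S \<subseteq> C\<close> root by simp
  then show ?thesis unfolding closed_pro_p_subgroup_def C_def using C by (simp add: C_def)
qed

section \<open>Sylow subgroups\<close>

lemma (in profinite) sylow_subgroup_iff_maximal_root_closed:
  assumes p: "Factorial_Ring.prime p"
  shows "sylow_subgroup p G T P \<longleftrightarrow> maximal_root_closed_subgroup p G P"
proof
  assume P: "sylow_subgroup p G T P"
  then have cP: "closed_pro_p_subgroup p G T P" unfolding sylow_subgroup_def by blast
  then have sub: "subgroup P G" unfolding closed_pro_p_subgroup_def by blast
  have root: "coprime_root_closed p G P"
    using closed_pro_p_subgroup_coprime_root_closed[OF cP p] .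
  have "R = P" if R: "subgroup R G" "coprime_root_closed p G R" "P \<subseteq> R" for R
  proof -
    have R_closure: "R \<subseteq> T closure_of R" using subgroup_subset_closure_of[OF R(1)] .
    then have "T closure_of R = P"
      using P closed_pro_p_subgroup_closure[OF R(1) p R(2)] R(3) unfolding sylow_subgroup_def by blast
    then show ?thesis using R_closure R(3) by blast
  qed
  then show "maximal_root_closed_subgroup p G P"
    unfolding maximal_root_closed_subgroup_def using sub root by blast
next
  assume P: "maximal_root_closed_subgroup p G P"
  then have sub: "subgroup P G" and root: "coprime_root_closed p G P"
    and max: "\<And>R. subgroup R G \<Longrightarrow> coprime_root_closed p G R \<Longrightarrow> P \<subseteq> R \<Longrightarrow> R = P"
    unfolding maximal_root_closed_subgroup_def by blast+
  have closure: "closed_pro_p_subgroup p G T (T closure_of P)"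
    using closed_pro_p_subgroup_closure[OF sub p root] .
  have maximal: "Q = P" if Q: "closed_pro_p_subgroup p G T Q" "P \<subseteq> Q" for Q
  proof (rule max)
    show "subgroup Q G" using Q(1) unfolding closed_pro_p_subgroup_def by blast
  qed (use Q closed_pro_p_subgroup_coprime_root_closed[OF Q(1) p] in auto)
  have "T closure_of P = P"
    using maximal[OF closure] subgroup_subset_closure_of[OF sub] by simp
  then show "sylow_subgroup p G T P"
    unfolding sylow_subgroup_def using closure maximal by simp
qed

theorem mainTheorem14:
  fixes G :: "('a, 'c) monoid_scheme" and TG :: "'a topology"
    and H :: "('b, 'd) monoid_scheme" and TH :: "'b topology"
    and \<phi> :: "'a \<Rightarrow> 'b" and p :: nat and P :: "'a set"
  assumes "profinite_group G TG" and "profinite_group H TH"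
    and "\<phi> \<in> iso G H"
    and "Factorial_Ring.prime p"
    and "sylow_subgroup p G TG P"
  shows "sylow_subgroup p H TH (\<phi> ` P)"
proof -
  interpret G: profinite G TG using profinite_group_imp_profinite[OF assms(1)] .
  interpret H: profinite H TH using profinite_group_imp_profinite[OF assms(2)] .
  have "maximal_root_closed_subgroup p G P"
    using G.sylow_subgroup_iff_maximal_root_closed[OF assms(4)] assms(5) by blast
  then have "maximal_root_closed_subgroup p H (\<phi> ` P)"
    using iso_maximal_root_closed_subgroup[OF G.is_group H.is_group assms(3)] by blast
  then show ?thesis
    using H.sylow_subgroup_iff_maximal_root_closed[OF assms(4)] by blast
qed

end
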